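(* Let $\Omega\subseteq\mathbb{R}^n$ be open. The sets $\mathbb{G}_{bd}(\Omega)$, $\mathbb{G}_{ft}(\Omega)$, $\mathbb{G}_{nf}(\Omega)$ and $\mathbb{G}(\Omega)$ are all Dedekind order complete with respect to the inclusion order $\subseteq$, where $f\subseteq g$ means $f(x)\subseteq g(x)$ for all $x\in\Omega$.
   Context: $\overline{\mathbb{R}}=\mathbb{R}\cup\{\pm\infty\}$, $\mathbb{I}\overline{\mathbb{R}}$ is the set of closed intervals $[\underline a,\overline a]$ with $\underline a\le\overline a$ in $\overline{\mathbb{R}}$, $a\in\overline{\mathbb{R}}$ identified with $[a,a]$. $\mathbb{A}(X)$ is the set of functions $X\to\mathbb{I}\overline{\mathbb{R}}$. $B_\delta(x)=\{y\in\Omega:\|x-y\|<\delta\}$. For dense $D\subseteq\Omega$ and $f\in\mathbb{A}(D)$: $I(D,\Omega,f)(x)=\sup_{\delta>0}\inf\{z\in f(y):y\in B_\delta(x)\cap D\}$, $S(D,\Omega,f)(x)=\inf_{\delta>0}\sup\{z\in f(y):y\in B_\delta(x)\cap D\}$, $F(D,\Omega,f)(x)=[I(D,\Omega,f)(x),S(D,\Omega,f)(x)]$. $f\in\mathbb{A}(\Omega)$ is D-continuous if $F(D,\Omega,f)=f$ for every dense $D\subseteq\Omega$; $\mathbb{G}(\Omega)$ is the set of D-continuous functions, and $\mathbb{G}_{bd}(\Omega)$, $\mathbb{G}_{ft}(\Omega)$, $\mathbb{G}_{nf}(\Omega)$ are its subsets of bounded, finite and nearly finite functions: $f$ is bounded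 if there is $M\in\mathbb{R}$ with $f(x)\subseteq[-M,M]$ for all $x$; finite if both endpoints of $f(x)$ are real for all $x$; nearly finite if there is an open dense $D\subseteq\Omega$ on which $f$ is finite. A poset is Dedekind order complete if every nonempty subset bounded above has a supremum in it and every nonempty subset bounded below has an infimum in it. *)

theory Defs
  imports "HOL-Analysis.Analysis" "HOL-Library.Extended_Real"
begin

definition IRbar :: "ereal set set" where
  "IRbar = {{a..b} | a b. a \<le> b}"

text \<open>A(Omega): interval-valued functions on Omega; outside Omega the value is fixed to the empty set
  so that functions are determined by their values on Omega.\<close>
definition Afun :: "'a set \<Rightarrow> ('a \<Rightarrow> ereal set) set" where
  "Afun \<Omega> = {f. (\<forall>x\<in>\<Omega>. f x \<in> IRbar) \<and> (\<forall>x. x \<notin> \<Omega> \<longrightarrow> f x = {})}"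

definition denseIn :: "'a::topological_space set \<Rightarrow> 'a set \<Rightarrow> bool" where
  "denseIn D \<Omega> \<longleftrightarrow> D \<subseteq> \<Omega> \<and> \<Omega> \<subseteq> closure D"

definition Bd :: "'a::real_normed_vector set \<Rightarrow> real \<Rightarrow> 'a \<Rightarrow> 'a set" where
  "Bd \<Omega> \<delta> x = {y \<in> \<Omega>. norm (x - y) < \<delta>}"

definition Ilow :: "'a::real_normed_vector set \<Rightarrow> 'a set \<Rightarrow> ('a \<Rightarrow> ereal set) \<Rightarrow> 'a \<Rightarrow> ereal" where
  "Ilow D \<Omega> f x = (SUP \<delta>\<in>{0<..}. Inf {z. \<exists>y \<in> Bd \<Omega> \<delta> x \<inter> D. z \<in> f y})"

definition Supp :: "'a::real_normed_vector set \<Rightarrow> 'a set \<Rightarrow> ('a \<Rightarrow> ereal set) \<Rightarrow> 'a \<Rightarrow> ereal" where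
  "Supp D \<Omega> f x = (INF \<delta>\<in>{0<..}. Sup {z. \<exists>y \<in> Bd \<Omega> \<delta> x \<inter> D. z \<in> f y})"

definition Fenv :: "'a::real_normed_vector set \<Rightarrow> 'a set \<Rightarrow> ('a \<Rightarrow> ereal set) \<Rightarrow> 'a \<Rightarrow> ereal set" where
  "Fenv D \<Omega> f x = {Ilow D \<Omega> f x .. Supp D \<Omega> f x}"

definition D_continuous :: "'a::real_normed_vector set \<Rightarrow> ('a \<Rightarrow> ereal set) \<Rightarrow> bool" where
  "D_continuous \<Omega> f \<longleftrightarrow> (\<forall>D. denseIn D \<Omega> \<longrightarrow> (\<forall>x\<in>\<Omega>. Fenv D \<Omega> f x = f x))"

definition Gset :: "'a::real_normed_vector set \<Rightarrow> ('a \<Rightarrow> ereal set) set" where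
  "Gset \<Omega> = {f \<in> Afun \<Omega>. D_continuous \<Omega> f}"

definition bounded_ifun :: "'a set \<Rightarrow> ('a \<Rightarrow> ereal set) \<Rightarrow> bool" where
  "bounded_ifun \<Omega> f \<longleftrightarrow> (\<exists>M::real. \<forall>x\<in>\<Omega>. f x \<subseteq> {ereal (-M) .. ereal M})"

definition finite_ifun :: "'a set \<Rightarrow> ('a \<Rightarrow> ereal set) \<Rightarrow> bool" where
  "finite_ifun \<Omega> f \<longleftrightarrow> (\<forall>x\<in>\<Omega>. \<exists>a b::real. a \<le> b \<and> f x = {ereal a .. ereal b})"

definition nearly_finite_ifun :: "'a::topological_space set \<Rightarrow> ('a \<Rightarrow> ereal set) \<Rightarrow> bool" where
  "nearly_finite_ifun \<Omega> f \<longleftrightarrow> (\<exists>D. open D \<and> denseIn D \<Omega> \<and> finite_ifun D f)"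

definition Gbd :: "'a::real_normed_vector set \<Rightarrow> ('a \<Rightarrow> ereal set) set" where
  "Gbd \<Omega> = {f \<in> Gset \<Omega>. bounded_ifun \<Omega> f}"

definition Gft :: "'a::real_normed_vector set \<Rightarrow> ('a \<Rightarrow> ereal set) set" where
  "Gft \<Omega> = {f \<in> Gset \<Omega>. finite_ifun \<Omega> f}"

definition Gnf :: "'a::real_normed_vector set \<Rightarrow> ('a \<Rightarrow> ereal set) set" where
  "Gnf \<Omega> = {f \<in> Gset \<Omega>. nearly_finite_ifun \<Omega> f}"

definition incl :: "'a set \<Rightarrow> ('a \<Rightarrow> ereal set) \<Rightarrow> ('a \<Rightarrow> ereal set) \<Rightarrow> bool" where
  "incl \<Omega> f g \<longleftrightarrow> (\<forall>x\<in>\<Omega>. f x \<subseteq> g x)"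

definition is_sup_in :: "'b set \<Rightarrow> ('b \<Rightarrow> 'b \<Rightarrow> bool) \<Rightarrow> 'b set \<Rightarrow> 'b \<Rightarrow> bool" where
  "is_sup_in S le A s \<longleftrightarrow> s \<in> S \<and> (\<forall>a\<in>A. le a s) \<and> (\<forall>u\<in>S. (\<forall>a\<in>A. le a u) \<longrightarrow> le s u)"

definition is_inf_in :: "'b set \<Rightarrow> ('b \<Rightarrow> 'b \<Rightarrow> bool) \<Rightarrow> 'b set \<Rightarrow> 'b \<Rightarrow> bool" where
  "is_inf_in S le A s \<longleftrightarrow> s \<in> S \<and> (\<forall>a\<in>A. le s a) \<and> (\<forall>u\<in>S. (\<forall>a\<in>A. le u a) \<longrightarrow> le u s)"

definition dedekind_complete :: "'b set \<Rightarrow> ('b \<Rightarrow> 'b \<Rightarrow> bool) \<Rightarrow> bool" where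
  "dedekind_complete S le \<longleftrightarrow>
     (\<forall>A. A \<subseteq> S \<and> A \<noteq> {} \<and> (\<exists>u\<in>S. \<forall>a\<in>A. le a u) \<longrightarrow> (\<exists>s. is_sup_in S le A s)) \<and>
     (\<forall>A. A \<subseteq> S \<and> A \<noteq> {} \<and> (\<exists>l\<in>S. \<forall>a\<in>A. le l a) \<longrightarrow> (\<exists>s. is_inf_in S le A s))"

end

theory Submission
  imports Defs
begin

(* An interval function in G(Omega) amounts to a pair of endpoint functions: the lower one is fixed
   by every I(D,Omega,-), the upper one by every S(D,Omega,-). The admissible lower endpoints are
   exactly the fixed points of I(Omega,Omega,S(Omega,Omega,-)), and this composite maps every
   function to one of them; hence they form a complete lattice for the pointwise order, with
   supremum I(S(sup a)) and infimum I(S(inf a)), and by negation so do the upper endpoints.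
   The supremum under inclusion of a nonempty family in G(Omega) is the interval function spanned by
   the lattice infimum of the lower and the lattice supremum of the upper endpoints; infima are
   dual, a common lower bound keeping the endpoints ordered. G_bd, G_ft and G_nf are closed
   downwards under inclusion inside G(Omega), so they inherit Dedekind completeness. *)

section \<open>Envelopes and their fixed points\<close>

definition lower_env :: "'a::real_normed_vector set \<Rightarrow> 'a set \<Rightarrow> ('a \<Rightarrow> ereal) \<Rightarrow> 'a \<Rightarrow> ereal" where
  "lower_env \<Omega> D \<phi> x = (SUP \<delta>\<in>{0<..}. INF y\<in>Bd \<Omega> \<delta> x \<inter> D. \<phi> y)"

definition upper_env :: "'a::real_normed_vector set \<Rightarrow> 'a set \<Rightarrow> ('a \<Rightarrow> ereal) \<Rightarrow> 'a \<Rightarrow> ereal" where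
  "upper_env \<Omega> D \<phi> x = (INF \<delta>\<in>{0<..}. SUP y\<in>Bd \<Omega> \<delta> x \<inter> D. \<phi> y)"

definition lower_Dcont :: "'a::real_normed_vector set \<Rightarrow> ('a \<Rightarrow> ereal) set" where
  "lower_Dcont \<Omega> = {a. \<forall>D. denseIn D \<Omega> \<longrightarrow> (\<forall>x\<in>\<Omega>. lower_env \<Omega> D a x = a x)}"

definition upper_Dcont :: "'a::real_normed_vector set \<Rightarrow> ('a \<Rightarrow> ereal) set" where
  "upper_Dcont \<Omega> = {b. \<forall>D. denseIn D \<Omega> \<longrightarrow> (\<forall>x\<in>\<Omega>. upper_env \<Omega> D b x = b x)}"

definition le_on :: "'a set \<Rightarrow> ('a \<Rightarrow> 'b::ord) \<Rightarrow> ('a \<Rightarrow> 'b) \<Rightarrow> bool" where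
  "le_on \<Omega> a b \<longleftrightarrow> (\<forall>x\<in>\<Omega>. a x \<le> b x)"

lemma Bd_subset_Bd:
  assumes "norm (x - y) + r \<le> s"
  shows "Bd \<Omega> r y \<subseteq> Bd \<Omega> s x"
proof
  fix z assume "z \<in> Bd \<Omega> r y"
  moreover have "norm (x - z) \<le> norm (x - y) + norm (y - z)"
    using dist_triangle[of x z y] by (simp add: dist_norm)
  ultimately show "z \<in> Bd \<Omega> s x" using assms by (simp add: Bd_def)
qed

lemma denseIn_self: "denseIn \<Omega> \<Omega>"
  by (simp add: denseIn_def closure_subset)

lemma lower_env_le: "x \<in> \<Omega> \<Longrightarrow> x \<in> D \<Longrightarrow> lower_env \<Omega> D \<phi> x \<le> \<phi> x"
  unfolding lower_env_def by (rule SUP_least) (auto intro!: INF_lower simp: Bd_def)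

lemma upper_env_ge: "x \<in> \<Omega> \<Longrightarrow> x \<in> D \<Longrightarrow> \<phi> x \<le> upper_env \<Omega> D \<phi> x"
  unfolding upper_env_def by (rule INF_greatest) (auto intro!: SUP_upper simp: Bd_def)

lemma lower_env_mono:
  "(\<And>y. y \<in> \<Omega> \<Longrightarrow> \<phi> y \<le> \<psi> y) \<Longrightarrow> lower_env \<Omega> D \<phi> x \<le> lower_env \<Omega> D \<psi> x"
  unfolding lower_env_def by (intro SUP_mono' INF_mono) (auto simp: Bd_def)

lemma upper_env_mono:
  "(\<And>y. y \<in> \<Omega> \<Longrightarrow> \<phi> y \<le> \<psi> y) \<Longrightarrow> upper_env \<Omega> D \<phi> x \<le> upper_env \<Omega> D \<psi> x"
  unfolding upper_env_def by (intro INF_mono' SUP_mono) (auto simp: Bd_def)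

lemma upper_env_uminus: "upper_env \<Omega> D \<phi> x = - lower_env \<Omega> D (- \<phi>) x"
  unfolding lower_env_def upper_env_def by (simp add: ereal_INF_uminus_eq ereal_SUP_uminus_eq)

lemma lower_env_le_lower_env_lower_env:
  assumes "x \<in> \<Omega>"
  shows "lower_env \<Omega> \<Omega> \<phi> x \<le> lower_env \<Omega> D (lower_env \<Omega> \<Omega> \<phi>) x"
  unfolding lower_env_def[of \<Omega> \<Omega> \<phi> x]
proof (rule SUP_least)
  fix \<delta> :: real assume "\<delta> \<in> {0<..}"
  then have \<delta>: "\<delta> > 0" by simp
  have "(INF y\<in>Bd \<Omega> \<delta> x \<inter> \<Omega>. \<phi> y) \<le> lower_env \<Omega> \<Omega> \<phi> y" if "y \<in> Bd \<Omega> (\<delta>/2) x" for y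
  proof -
    have "Bd \<Omega> (\<delta>/2) y \<subseteq> Bd \<Omega> \<delta> x"
      using that by (intro Bd_subset_Bd) (simp add: Bd_def)
    then have "(INF y\<in>Bd \<Omega> \<delta> x \<inter> \<Omega>. \<phi> y) \<le> (INF z\<in>Bd \<Omega> (\<delta>/2) y \<inter> \<Omega>. \<phi> z)"
      by (intro INF_superset_mono) auto
    also have "\<dots> \<le> lower_env \<Omega> \<Omega> \<phi> y"
      unfolding lower_env_def using \<delta> by (intro SUP_upper) auto
    finally show ?thesis .
  qed
  then have "(INF y\<in>Bd \<Omega> \<delta> x \<inter> \<Omega>. \<phi> y) \<le> (INF y\<in>Bd \<Omega> (\<delta>/2) x \<inter> D. lower_env \<Omega> \<Omega> \<phi> y)"
    by (intro INF_greatest) auto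
  also have "\<dots> \<le> lower_env \<Omega> D (lower_env \<Omega> \<Omega> \<phi>) x"
    unfolding lower_env_def[of \<Omega> D] using \<delta> by (intro SUP_upper) auto
  finally show "(INF y\<in>Bd \<Omega> \<delta> x \<inter> \<Omega>. \<phi> y) \<le> lower_env \<Omega> D (lower_env \<Omega> \<Omega> \<phi>) x" .
qed

lemma lower_upper_env_less_in_dense:
  assumes D: "denseIn D \<Omega>" and \<delta>: "\<delta> > 0"
    and t: "lower_env \<Omega> \<Omega> (upper_env \<Omega> \<Omega> \<phi>) x < t"
  obtains z where "z \<in> Bd \<Omega> \<delta> x \<inter> D" and "lower_env \<Omega> \<Omega> (upper_env \<Omega> \<Omega> \<phi>) z < t"
proof -
  have "(INF y\<in>Bd \<Omega> (\<delta>/2) x \<inter> \<Omega>. upper_env \<Omega> \<Omega> \<phi> y) \<le> lower_env \<Omega> \<Omega> (upper_env \<Omega> \<Omega> \<phi>) x"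
    unfolding lower_env_def[of \<Omega> \<Omega> "upper_env \<Omega> \<Omega> \<phi>"] using \<delta> by (intro SUP_upper) auto
  then have "(INF y\<in>Bd \<Omega> (\<delta>/2) x \<inter> \<Omega>. upper_env \<Omega> \<Omega> \<phi> y) < t"
    using t by (rule order_le_less_trans)
  then obtain y where y: "y \<in> Bd \<Omega> (\<delta>/2) x" and "upper_env \<Omega> \<Omega> \<phi> y < t"
    by (auto simp: INF_less_iff)
  then obtain \<eta> where \<eta>: "\<eta> > 0" and sup_lt: "(SUP w\<in>Bd \<Omega> \<eta> y \<inter> \<Omega>. \<phi> w) < t"
    unfolding upper_env_def by (auto simp: INF_less_iff)
  \<comment> \<open>\<phi> < t on Bd \<Omega> \<eta> y; a point z of D close to y has a whole ball inside it.\<close>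
  define r where "r = min \<eta> (\<delta>/2)"
  have r: "r > 0" "r \<le> \<eta>" "r \<le> \<delta>/2" using \<eta> \<delta> by (simp_all add: r_def)
  have "y \<in> closure D" using y D by (auto simp: denseIn_def Bd_def)
  then obtain z where z: "z \<in> D" and yz: "norm (y - z) < r/2"
    using r unfolding closure_approachable by (metis dist_norm norm_minus_commute half_gt_zero)
  have z\<Omega>: "z \<in> \<Omega>" using z D by (auto simp: denseIn_def)
  have "lower_env \<Omega> \<Omega> (upper_env \<Omega> \<Omega> \<phi>) z \<le> upper_env \<Omega> \<Omega> \<phi> z"
    by (rule lower_env_le[OF z\<Omega> z\<Omega>])
  also have "\<dots> \<le> (SUP w\<in>Bd \<Omega> (r/2) z \<inter> \<Omega>. \<phi> w)"
    unfolding upper_env_def using r by (intro INF_lower) simp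
  also have "\<dots> \<le> (SUP w\<in>Bd \<Omega> \<eta> y \<inter> \<Omega>. \<phi> w)"
  proof (intro SUP_subset_mono Int_mono order.refl Bd_subset_Bd)
    show "norm (y - z) + r/2 \<le> \<eta>" using yz r by linarith
  qed
  also have "\<dots> < t" by (fact sup_lt)
  finally have "lower_env \<Omega> \<Omega> (upper_env \<Omega> \<Omega> \<phi>) z < t" .
  moreover have "z \<in> Bd \<Omega> (\<delta>/2) y"
    using yz z\<Omega> r by (simp add: Bd_def)
  then have "z \<in> Bd \<Omega> \<delta> x"
    using Bd_subset_Bd[of x y "\<delta>/2" \<delta> \<Omega>] y by (auto simp: Bd_def)
  ultimately show thesis using that z by blast
qed

lemma lower_upper_env_in_lower_Dcont: "lower_env \<Omega> \<Omega> (upper_env \<Omega> \<Omega> \<phi>) \<in> lower_Dcont \<Omega>"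
  unfolding lower_Dcont_def
proof (intro CollectI allI impI ballI antisym)
  fix D x assume D: "denseIn D \<Omega>" and x: "x \<in> \<Omega>"
  let ?s = "lower_env \<Omega> \<Omega> (upper_env \<Omega> \<Omega> \<phi>)"
  show "lower_env \<Omega> D ?s x \<le> ?s x"
    unfolding lower_env_def[of \<Omega> D]
  proof (rule SUP_least, rule dense_ge)
    fix \<delta> :: real and t assume "\<delta> \<in> {0<..}" and t: "?s x < t"
    then have "\<delta> > 0" by simp
    with D obtain z where "z \<in> Bd \<Omega> \<delta> x \<inter> D" and "?s z < t"
      using t by (rule lower_upper_env_less_in_dense)
    then show "(INF y\<in>Bd \<Omega> \<delta> x \<inter> D. ?s y) \<le> t"
      by (meson INF_lower order.strict_implies_order order_trans)
  qed
  show "?s x \<le> lower_env \<Omega> D ?s x"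
    using x by (rule lower_env_le_lower_env_lower_env)
qed

lemma denseIn_Diff_sublevel:
  assumes "\<And>w. w \<in> E \<Longrightarrow> t < upper_env \<Omega> \<Omega> a w"
  shows "denseIn (\<Omega> - {y \<in> E. a y < t}) \<Omega>"
  unfolding denseIn_def
proof (intro conjI subsetI)
  fix w assume w: "w \<in> \<Omega>"
  show "w \<in> closure (\<Omega> - {y \<in> E. a y < t})"
    unfolding closure_approachable
  proof (intro allI impI)
    fix e :: real assume e: "e > 0"
    show "\<exists>z\<in>\<Omega> - {y \<in> E. a y < t}. dist z w < e"
    proof (cases "w \<in> E")
      case True
      have "t < upper_env \<Omega> \<Omega> a w" using True by (rule assms)
      also have "\<dots> \<le> (SUP y\<in>Bd \<Omega> e w \<inter> \<Omega>. a y)"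
        unfolding upper_env_def using e by (intro INF_lower) simp
      finally obtain z where "z \<in> Bd \<Omega> e w" and "t < a z"
        by (auto simp: less_SUP_iff)
      then show ?thesis by (auto simp: Bd_def dist_norm norm_minus_commute)
    next
      case False
      then show ?thesis using w e by (intro bexI[of _ w]) auto
    qed
  qed
qed auto

lemma lower_Dcont_lower_env: "a \<in> lower_Dcont \<Omega> \<Longrightarrow> x \<in> \<Omega> \<Longrightarrow> lower_env \<Omega> \<Omega> a x = a x"
  using denseIn_self by (auto simp: lower_Dcont_def)

lemma lower_Dcont_lower_upper_env:
  assumes a: "a \<in> lower_Dcont \<Omega>" and x: "x \<in> \<Omega>"
  shows "lower_env \<Omega> \<Omega> (upper_env \<Omega> \<Omega> a) x = a x"
proof (rule antisym)
  show "lower_env \<Omega> \<Omega> (upper_env \<Omega> \<Omega> a) x \<le> a x"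
    unfolding lower_env_def[of \<Omega> \<Omega> "upper_env \<Omega> \<Omega> a"]
  proof (rule dense_ge, rule SUP_least)
    fix t and \<delta> :: real assume t: "a x < t" and \<delta>: "\<delta> \<in> {0<..}"
    show "(INF y\<in>Bd \<Omega> \<delta> x \<inter> \<Omega>. upper_env \<Omega> \<Omega> a y) \<le> t"
    proof (rule ccontr)
      assume "\<not> ?thesis"
      then have "\<And>w. w \<in> Bd \<Omega> \<delta> x \<Longrightarrow> t < upper_env \<Omega> \<Omega> a w"
        by (metis (no_types, lifting) INF_lower IntI Bd_def mem_Collect_eq not_le order_less_le_trans)
      \<comment> \<open>Deleting the points of the ball where a is below t leaves a dense set D,
        on which a is at least t near x; D-continuity of a then forces a x \<ge> t.\<close>
      then have D: "denseIn (\<Omega> - {y \<in> Bd \<Omega> \<delta> x. a y < t}) \<Omega>"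
        by (rule denseIn_Diff_sublevel)
      have "t \<le> (INF y\<in>Bd \<Omega> \<delta> x \<inter> (\<Omega> - {y \<in> Bd \<Omega> \<delta> x. a y < t}). a y)"
        by (rule INF_greatest) auto
      also have "\<dots> \<le> lower_env \<Omega> (\<Omega> - {y \<in> Bd \<Omega> \<delta> x. a y < t}) a x"
        unfolding lower_env_def using \<delta> by (intro SUP_upper) auto
      also have "\<dots> = a x"
        using a D x by (auto simp: lower_Dcont_def)
      finally show False using t by simp
    qed
  qed
  have "a x = lower_env \<Omega> \<Omega> a x"
    using a x by (simp add: lower_Dcont_lower_env)
  also have "\<dots> \<le> lower_env \<Omega> \<Omega> (upper_env \<Omega> \<Omega> a) x"
    by (intro lower_env_mono upper_env_ge) auto
  finally show "a x \<le> lower_env \<Omega> \<Omega> (upper_env \<Omega> \<Omega> a) x" .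
qed

section \<open>Completeness of the lattices of endpoint functions\<close>

lemma lower_Dcont_cong:
  assumes a: "a \<in> lower_Dcont \<Omega>" and eq: "\<And>x. x \<in> \<Omega> \<Longrightarrow> a' x = a x"
  shows "a' \<in> lower_Dcont \<Omega>"
proof -
  have "lower_env \<Omega> D a' x = lower_env \<Omega> D a x" for D x
    using eq by (intro antisym lower_env_mono) simp_all
  with a eq show ?thesis by (simp add: lower_Dcont_def)
qed

lemma is_sup_lower_Dcont:
  assumes "A \<subseteq> lower_Dcont \<Omega>"
  shows "is_sup_in (lower_Dcont \<Omega>) (le_on \<Omega>) A (lower_env \<Omega> \<Omega> (upper_env \<Omega> \<Omega> (\<lambda>x. SUP a\<in>A. a x)))"
  unfolding is_sup_in_def le_on_def
proof (intro conjI ballI impI)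
  let ?s = "lower_env \<Omega> \<Omega> (upper_env \<Omega> \<Omega> (\<lambda>x. SUP a\<in>A. a x))"
  show "?s \<in> lower_Dcont \<Omega>" by (rule lower_upper_env_in_lower_Dcont)
  fix a x assume a: "a \<in> A" and x: "x \<in> \<Omega>"
  have "a x = lower_env \<Omega> \<Omega> (upper_env \<Omega> \<Omega> a) x"
    using a x assms by (auto simp: lower_Dcont_lower_upper_env)
  also have "\<dots> \<le> ?s x"
    using a by (intro lower_env_mono upper_env_mono SUP_upper)
  finally show "a x \<le> ?s x" .
next
  let ?s = "lower_env \<Omega> \<Omega> (upper_env \<Omega> \<Omega> (\<lambda>x. SUP a\<in>A. a x))"
  fix v x assume v: "v \<in> lower_Dcont \<Omega>" and ub: "\<forall>a\<in>A. \<forall>x\<in>\<Omega>. a x \<le> v x" and x: "x \<in> \<Omega>"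
  have "?s x \<le> lower_env \<Omega> \<Omega> (upper_env \<Omega> \<Omega> v) x"
    using ub by (intro lower_env_mono upper_env_mono SUP_least) auto
  also have "\<dots> = v x" using v x by (rule lower_Dcont_lower_upper_env)
  finally show "?s x \<le> v x" .
qed

lemma is_inf_lower_Dcont:
  assumes "A \<subseteq> lower_Dcont \<Omega>"
  shows "is_inf_in (lower_Dcont \<Omega>) (le_on \<Omega>) A (lower_env \<Omega> \<Omega> (upper_env \<Omega> \<Omega> (\<lambda>x. INF a\<in>A. a x)))"
  unfolding is_inf_in_def le_on_def
proof (intro conjI ballI impI)
  let ?s = "lower_env \<Omega> \<Omega> (upper_env \<Omega> \<Omega> (\<lambda>x. INF a\<in>A. a x))"
  show "?s \<in> lower_Dcont \<Omega>" by (rule lower_upper_env_in_lower_Dcont)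
  fix a x assume a: "a \<in> A" and x: "x \<in> \<Omega>"
  have "?s x \<le> lower_env \<Omega> \<Omega> (upper_env \<Omega> \<Omega> a) x"
    using a by (intro lower_env_mono upper_env_mono INF_lower)
  also have "\<dots> = a x"
    using a x assms by (auto simp: lower_Dcont_lower_upper_env)
  finally show "?s x \<le> a x" .
next
  let ?s = "lower_env \<Omega> \<Omega> (upper_env \<Omega> \<Omega> (\<lambda>x. INF a\<in>A. a x))"
  fix v x assume v: "v \<in> lower_Dcont \<Omega>" and lb: "\<forall>a\<in>A. \<forall>x\<in>\<Omega>. v x \<le> a x" and x: "x \<in> \<Omega>"
  have "v x = lower_env \<Omega> \<Omega> (upper_env \<Omega> \<Omega> v) x"
    using v x by (simp add: lower_Dcont_lower_upper_env)
  also have "\<dots> \<le> ?s x"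
    using lb by (intro lower_env_mono upper_env_mono INF_greatest) auto
  finally show "v x \<le> ?s x" .
qed

lemma upper_Dcont_iff_uminus: "b \<in> upper_Dcont \<Omega> \<longleftrightarrow> - b \<in> lower_Dcont \<Omega>"
  unfolding upper_Dcont_def lower_Dcont_def upper_env_uminus
  by (simp add: ereal_uminus_eq_reorder)

lemma uminus_uminus_ereal_fun [simp]: "- (- f) = (f :: 'a \<Rightarrow> ereal)"
  by (simp add: fun_eq_iff)

lemma le_on_uminus: "le_on \<Omega> (- a) (- b) \<longleftrightarrow> le_on \<Omega> b (a :: 'a \<Rightarrow> ereal)"
  by (simp add: le_on_def)

lemma upper_Dcont_cong:
  "b \<in> upper_Dcont \<Omega> \<Longrightarrow> (\<And>x. x \<in> \<Omega> \<Longrightarrow> b' x = b x) \<Longrightarrow> b' \<in> upper_Dcont \<Omega>"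
  unfolding upper_Dcont_iff_uminus by (erule lower_Dcont_cong) simp

lemma is_sup_upper_Dcont_uminus:
  assumes "is_inf_in (lower_Dcont \<Omega>) (le_on \<Omega>) (uminus ` A) s"
  shows "is_sup_in (upper_Dcont \<Omega>) (le_on \<Omega>) A (- s)"
  unfolding is_sup_in_def
proof (intro conjI ballI impI)
  show "- s \<in> upper_Dcont \<Omega>"
    using assms by (simp add: is_inf_in_def upper_Dcont_iff_uminus)
  show "le_on \<Omega> a (- s)" if "a \<in> A" for a
    using assms that le_on_uminus[of \<Omega> "- a" s] by (auto simp: is_inf_in_def)
  show "le_on \<Omega> (- s) u" if "u \<in> upper_Dcont \<Omega>" and "\<forall>a\<in>A. le_on \<Omega> a u" for u
  proof -
    have "- u \<in> lower_Dcont \<Omega>" and "\<forall>a\<in>A. le_on \<Omega> (- u) (- a)"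
      using that by (simp_all add: upper_Dcont_iff_uminus le_on_uminus)
    then have "le_on \<Omega> (- u) s" using assms by (auto simp: is_inf_in_def)
    then show ?thesis using le_on_uminus[of \<Omega> s "- u"] by simp
  qed
qed

lemma is_inf_upper_Dcont_uminus:
  assumes "is_sup_in (lower_Dcont \<Omega>) (le_on \<Omega>) (uminus ` A) s"
  shows "is_inf_in (upper_Dcont \<Omega>) (le_on \<Omega>) A (- s)"
  unfolding is_inf_in_def
proof (intro conjI ballI impI)
  show "- s \<in> upper_Dcont \<Omega>"
    using assms by (simp add: is_sup_in_def upper_Dcont_iff_uminus)
  show "le_on \<Omega> (- s) a" if "a \<in> A" for a
    using assms that le_on_uminus[of \<Omega> s "- a"] by (auto simp: is_sup_in_def)
  show "le_on \<Omega> u (- s)" if "u \<in> upper_Dcont \<Omega>" and "\<forall>a\<in>A. le_on \<Omega> u a" for u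
  proof -
    have "- u \<in> lower_Dcont \<Omega>" and "\<forall>a\<in>A. le_on \<Omega> (- a) (- u)"
      using that by (simp_all add: upper_Dcont_iff_uminus le_on_uminus)
    then have "le_on \<Omega> s (- u)" using assms by (auto simp: is_sup_in_def)
    then show ?thesis using le_on_uminus[of \<Omega> "- u" s] by simp
  qed
qed

lemma upper_Dcont_has_sup:
  assumes "A \<subseteq> upper_Dcont \<Omega>"
  shows "\<exists>s. is_sup_in (upper_Dcont \<Omega>) (le_on \<Omega>) A s"
proof -
  have "uminus ` A \<subseteq> lower_Dcont \<Omega>"
    using assms by (auto simp: upper_Dcont_iff_uminus)
  then show ?thesis by (blast intro: is_sup_upper_Dcont_uminus is_inf_lower_Dcont)
qed

lemma upper_Dcont_has_inf:
  assumes "A \<subseteq> upper_Dcont \<Omega>"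
  shows "\<exists>s. is_inf_in (upper_Dcont \<Omega>) (le_on \<Omega>) A s"
proof -
  have "uminus ` A \<subseteq> lower_Dcont \<Omega>"
    using assms by (auto simp: upper_Dcont_iff_uminus)
  then show ?thesis by (blast intro: is_inf_upper_Dcont_uminus is_sup_lower_Dcont)
qed

section \<open>Interval functions\<close>

lemma Afun_eq_Icc:
  assumes "f \<in> Afun \<Omega>" "x \<in> \<Omega>"
  shows "f x = {Inf (f x)..Sup (f x)}" and "Inf (f x) \<le> Sup (f x)"
proof -
  from assms obtain a b where "f x = {a..b}" "a \<le> b" by (auto simp: Afun_def IRbar_def)
  then show "f x = {Inf (f x)..Sup (f x)}" and "Inf (f x) \<le> Sup (f x)" by simp_all
qed

lemma Inf_UNION_eq: "Inf (\<Union>y\<in>S. F y) = (INF y\<in>S. Inf (F y :: 'b::complete_lattice set))"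
  by (rule antisym) (auto intro!: INF_greatest Inf_greatest intro: Inf_lower INF_lower2)

lemma Sup_UNION_eq: "Sup (\<Union>y\<in>S. F y) = (SUP y\<in>S. Sup (F y :: 'b::complete_lattice set))"
  using SUP_UNION[of "\<lambda>x. x" F S] by simp

lemma Ilow_eq_lower_env: "Ilow D \<Omega> f x = lower_env \<Omega> D (Inf \<circ> f) x"
  unfolding Ilow_def lower_env_def by (simp add: UNION_eq[symmetric] Inf_UNION_eq)

lemma Supp_eq_upper_env: "Supp D \<Omega> f x = upper_env \<Omega> D (Sup \<circ> f) x"
  unfolding Supp_def upper_env_def by (simp add: UNION_eq[symmetric] Sup_UNION_eq)

lemma Gset_iff:
  "f \<in> Gset \<Omega> \<longleftrightarrow> f \<in> Afun \<Omega> \<and> Inf \<circ> f \<in> lower_Dcont \<Omega> \<and> Sup \<circ> f \<in> upper_Dcont \<Omega>"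
proof (cases "f \<in> Afun \<Omega>")
  case True
  have "Fenv D \<Omega> f x = f x \<longleftrightarrow>
      lower_env \<Omega> D (Inf \<circ> f) x = Inf (f x) \<and> upper_env \<Omega> D (Sup \<circ> f) x = Sup (f x)"
    if "x \<in> \<Omega>" for D x
    using Afun_eq_Icc[OF True that]
    by (metis Fenv_def Ilow_eq_lower_env Supp_eq_upper_env Icc_eq_Icc)
  with True show ?thesis
    by (auto simp: Gset_def D_continuous_def lower_Dcont_def upper_Dcont_def)
qed (simp add: Gset_def)

definition interval_fun :: "'a set \<Rightarrow> ('a \<Rightarrow> ereal) \<Rightarrow> ('a \<Rightarrow> ereal) \<Rightarrow> 'a \<Rightarrow> ereal set" where
  "interval_fun \<Omega> a b x = (if x \<in> \<Omega> then {a x..b x} else {})"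

lemma interval_fun_in_Afun: "le_on \<Omega> a b \<Longrightarrow> interval_fun \<Omega> a b \<in> Afun \<Omega>"
  by (auto simp: Afun_def IRbar_def interval_fun_def le_on_def)

lemma
  assumes "le_on \<Omega> a b" "x \<in> \<Omega>"
  shows Inf_interval_fun: "Inf (interval_fun \<Omega> a b x) = a x"
    and Sup_interval_fun: "Sup (interval_fun \<Omega> a b x) = b x"
  using assms by (simp_all add: interval_fun_def le_on_def)

lemma interval_fun_in_Gset:
  assumes "le_on \<Omega> a b" "a \<in> lower_Dcont \<Omega>" "b \<in> upper_Dcont \<Omega>"
  shows "interval_fun \<Omega> a b \<in> Gset \<Omega>"
  using assms interval_fun_in_Afun[OF assms(1)]
  by (auto simp: Gset_iff Inf_interval_fun Sup_interval_fun
      intro: lower_Dcont_cong upper_Dcont_cong)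

lemma incl_iff_endpoints:
  assumes "f \<in> Afun \<Omega>" "g \<in> Afun \<Omega>"
  shows "incl \<Omega> f g \<longleftrightarrow> le_on \<Omega> (Inf \<circ> g) (Inf \<circ> f) \<and> le_on \<Omega> (Sup \<circ> f) (Sup \<circ> g)"
proof -
  have "f x \<subseteq> g x \<longleftrightarrow> Inf (g x) \<le> Inf (f x) \<and> Sup (f x) \<le> Sup (g x)" if "x \<in> \<Omega>" for x
    using Afun_eq_Icc[OF assms(1) that] Afun_eq_Icc[OF assms(2) that]
    by (metis atLeastatMost_subset_iff not_le)
  then show ?thesis by (auto simp: incl_def le_on_def)
qed

lemma
  assumes "f \<in> Afun \<Omega>" "le_on \<Omega> l u"
  shows incl_interval_fun_iff:
      "incl \<Omega> f (interval_fun \<Omega> l u) \<longleftrightarrow> le_on \<Omega> l (Inf \<circ> f) \<and> le_on \<Omega> (Sup \<circ> f) u"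
    and interval_fun_incl_iff:
      "incl \<Omega> (interval_fun \<Omega> l u) f \<longleftrightarrow> le_on \<Omega> (Inf \<circ> f) l \<and> le_on \<Omega> u (Sup \<circ> f)"
  using incl_iff_endpoints[OF assms(1) interval_fun_in_Afun[OF assms(2)]]
    incl_iff_endpoints[OF interval_fun_in_Afun[OF assms(2)] assms(1)]
  by (simp_all add: le_on_def Inf_interval_fun[OF assms(2)] Sup_interval_fun[OF assms(2)])

lemma Gset_has_sup:
  assumes A: "A \<subseteq> Gset \<Omega>" and "A \<noteq> {}"
  shows "\<exists>s. is_sup_in (Gset \<Omega>) (incl \<Omega>) A s"
proof -
  have AG: "a \<in> Afun \<Omega>" "Inf \<circ> a \<in> lower_Dcont \<Omega>" "Sup \<circ> a \<in> upper_Dcont \<Omega>" if "a \<in> A" for a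
    using A that by (auto simp: Gset_iff)
  obtain l where l: "is_inf_in (lower_Dcont \<Omega>) (le_on \<Omega>) ((\<lambda>a. Inf \<circ> a) ` A) l"
    using is_inf_lower_Dcont[of "(\<lambda>a. Inf \<circ> a) ` A" \<Omega>] AG by blast
  obtain u where u: "is_sup_in (upper_Dcont \<Omega>) (le_on \<Omega>) ((\<lambda>a. Sup \<circ> a) ` A) u"
    using upper_Dcont_has_sup[of "(\<lambda>a. Sup \<circ> a) ` A" \<Omega>] AG by blast
  obtain a0 where a0: "a0 \<in> A" using \<open>A \<noteq> {}\<close> by blast
  have lu: "le_on \<Omega> l u"
    using l u a0 Afun_eq_Icc(2)[OF AG(1)[OF a0]]
    unfolding is_inf_in_def is_sup_in_def le_on_def by (fastforce intro: order_trans)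
  define s where "s = interval_fun \<Omega> l u"
  have sG: "s \<in> Gset \<Omega>"
    using l u lu unfolding s_def is_inf_in_def is_sup_in_def by (blast intro: interval_fun_in_Gset)
  have "incl \<Omega> a s" if "a \<in> A" for a
    using l u that by (simp add: s_def incl_interval_fun_iff[OF AG(1) lu] is_inf_in_def is_sup_in_def)
  moreover have "incl \<Omega> s w" if w: "w \<in> Gset \<Omega>" "\<forall>a\<in>A. incl \<Omega> a w" for w
  proof -
    have "le_on \<Omega> (Inf \<circ> w) (Inf \<circ> a)" "le_on \<Omega> (Sup \<circ> a) (Sup \<circ> w)" if "a \<in> A" for a
      using w that incl_iff_endpoints[OF AG(1)[OF that], of w] by (auto simp: Gset_iff)
    with l u w show ?thesis
      by (simp add: s_def interval_fun_incl_iff[OF _ lu] Gset_iff is_inf_in_def is_sup_in_def)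
  qed
  ultimately show ?thesis using sG unfolding is_sup_in_def by blast
qed

lemma Gset_has_inf:
  assumes A: "A \<subseteq> Gset \<Omega>" and b: "b \<in> Gset \<Omega>" "\<forall>a\<in>A. incl \<Omega> b a"
  shows "\<exists>s. is_inf_in (Gset \<Omega>) (incl \<Omega>) A s"
proof -
  have AG: "a \<in> Afun \<Omega>" "Inf \<circ> a \<in> lower_Dcont \<Omega>" "Sup \<circ> a \<in> upper_Dcont \<Omega>" if "a \<in> A" for a
    using A that by (auto simp: Gset_iff)
  obtain l where l: "is_sup_in (lower_Dcont \<Omega>) (le_on \<Omega>) ((\<lambda>a. Inf \<circ> a) ` A) l"
    using is_sup_lower_Dcont[of "(\<lambda>a. Inf \<circ> a) ` A" \<Omega>] AG by blast
  obtain u where u: "is_inf_in (upper_Dcont \<Omega>) (le_on \<Omega>) ((\<lambda>a. Sup \<circ> a) ` A) u"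
    using upper_Dcont_has_inf[of "(\<lambda>a. Sup \<circ> a) ` A" \<Omega>] AG by blast
  have b_endpoints: "le_on \<Omega> (Inf \<circ> a) (Inf \<circ> b)" "le_on \<Omega> (Sup \<circ> b) (Sup \<circ> a)" if "a \<in> A" for a
    using b that incl_iff_endpoints[of b \<Omega> a] AG(1)[OF that] by (auto simp: Gset_iff)
  have "le_on \<Omega> l (Inf \<circ> b)" "le_on \<Omega> (Sup \<circ> b) u"
    using l u b b_endpoints unfolding is_sup_in_def is_inf_in_def by (auto simp: Gset_iff)
  then have lu: "le_on \<Omega> l u"
    using Afun_eq_Icc(2)[of b \<Omega>] b unfolding le_on_def Gset_iff by (fastforce intro: order_trans)
  define s where "s = interval_fun \<Omega> l u"
  have sG: "s \<in> Gset \<Omega>"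
    using l u lu unfolding s_def is_inf_in_def is_sup_in_def by (blast intro: interval_fun_in_Gset)
  have "incl \<Omega> s a" if "a \<in> A" for a
    using l u that by (simp add: s_def interval_fun_incl_iff[OF AG(1) lu] is_inf_in_def is_sup_in_def)
  moreover have "incl \<Omega> w s" if w: "w \<in> Gset \<Omega>" "\<forall>a\<in>A. incl \<Omega> w a" for w
  proof -
    have "le_on \<Omega> (Inf \<circ> a) (Inf \<circ> w)" "le_on \<Omega> (Sup \<circ> w) (Sup \<circ> a)" if "a \<in> A" for a
      using w that incl_iff_endpoints[of w \<Omega> a] AG(1)[OF that] by (auto simp: Gset_iff)
    with l u w show ?thesis
      by (simp add: s_def incl_interval_fun_iff[OF _ lu] Gset_iff is_inf_in_def is_sup_in_def)
  qed
  ultimately show ?thesis using sG unfolding is_inf_in_def by blast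
qed

lemma dedekind_complete_Gset: "dedekind_complete (Gset \<Omega>) (incl \<Omega>)"
  unfolding dedekind_complete_def by (blast intro: Gset_has_sup Gset_has_inf)

section \<open>Downward closed subsets\<close>

lemma dedekind_complete_downward_closed:
  assumes T: "dedekind_complete T le" and ST: "S \<subseteq> T"
    and down: "\<And>g h. g \<in> S \<Longrightarrow> h \<in> T \<Longrightarrow> le h g \<Longrightarrow> h \<in> S"
  shows "dedekind_complete S le"
  unfolding dedekind_complete_def
proof (intro conjI allI impI)
  fix A assume "A \<subseteq> S \<and> A \<noteq> {} \<and> (\<exists>u\<in>S. \<forall>a\<in>A. le a u)"
  then obtain u where A: "A \<subseteq> S" "A \<noteq> {}" and u: "u \<in> S" "\<forall>a\<in>A. le a u" by blast
  have "A \<subseteq> T \<and> A \<noteq> {} \<and> (\<exists>u\<in>T. \<forall>a\<in>A. le a u)" using A u ST by auto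
  then obtain s where s: "is_sup_in T le A s"
    using T unfolding dedekind_complete_def by blast
  then have "le s u" using u ST unfolding is_sup_in_def by auto
  then have "s \<in> S" using s u down unfolding is_sup_in_def by auto
  with s ST have "is_sup_in S le A s"
    unfolding is_sup_in_def by auto
  then show "\<exists>s. is_sup_in S le A s" ..
next
  fix A assume "A \<subseteq> S \<and> A \<noteq> {} \<and> (\<exists>l\<in>S. \<forall>a\<in>A. le l a)"
  then obtain l a where A: "A \<subseteq> S" "a \<in> A" and l: "l \<in> S" "\<forall>a\<in>A. le l a" by blast
  have "A \<subseteq> T \<and> A \<noteq> {} \<and> (\<exists>l\<in>T. \<forall>a\<in>A. le l a)" using A l ST by auto
  then obtain s where s: "is_inf_in T le A s"
    using T unfolding dedekind_complete_def by blast
  then have "s \<in> S" using A down unfolding is_inf_in_def by auto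
  with s ST have "is_inf_in S le A s"
    unfolding is_inf_in_def by auto
  then show "\<exists>s. is_inf_in S le A s" ..
qed

lemma Gbd_downward_closed: "g \<in> Gbd \<Omega> \<Longrightarrow> h \<in> Gset \<Omega> \<Longrightarrow> incl \<Omega> h g \<Longrightarrow> h \<in> Gbd \<Omega>"
  unfolding Gbd_def bounded_ifun_def incl_def by blast

lemma finite_ifun_subset:
  assumes g: "finite_ifun E g" and "E \<subseteq> \<Omega>" and h: "h \<in> Afun \<Omega>"
    and sub: "\<And>x. x \<in> E \<Longrightarrow> h x \<subseteq> g x"
  shows "finite_ifun E h"
  unfolding finite_ifun_def
proof
  fix x assume x: "x \<in> E"
  obtain a b where gx: "g x = {ereal a..ereal b}" using g x unfolding finite_ifun_def by blast
  obtain p q where hx: "h x = {p..q}" and "p \<le> q"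
    using h x \<open>E \<subseteq> \<Omega>\<close> unfolding Afun_def IRbar_def by blast
  then have "p \<in> g x" "q \<in> g x" using sub[OF x] by auto
  then obtain p' q' where "p = ereal p'" "q = ereal q'"
    unfolding gx by (cases p; cases q) auto
  with hx \<open>p \<le> q\<close> show "\<exists>a b. a \<le> b \<and> h x = {ereal a..ereal b}" by auto
qed

lemma Gft_downward_closed: "g \<in> Gft \<Omega> \<Longrightarrow> h \<in> Gset \<Omega> \<Longrightarrow> incl \<Omega> h g \<Longrightarrow> h \<in> Gft \<Omega>"
  unfolding Gft_def Gset_def incl_def by (blast intro: finite_ifun_subset)

lemma Gnf_downward_closed:
  assumes g: "g \<in> Gnf \<Omega>" and h: "h \<in> Gset \<Omega>" and hg: "incl \<Omega> h g"
  shows "h \<in> Gnf \<Omega>"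
proof -
  obtain D where D: "open D" "denseIn D \<Omega>" "finite_ifun D g"
    using g by (auto simp: Gnf_def nearly_finite_ifun_def)
  have "D \<subseteq> \<Omega>" using D(2) by (simp add: denseIn_def)
  with D(3) have "finite_ifun D h"
    by (rule finite_ifun_subset) (use h hg \<open>D \<subseteq> \<Omega>\<close> in \<open>auto simp: Gset_def incl_def\<close>)
  with D h show ?thesis by (auto simp: Gnf_def nearly_finite_ifun_def)
qed

theorem theorem16:
  fixes \<Omega> :: "'a::euclidean_space set"
  assumes "open \<Omega>"
  shows "dedekind_complete (Gbd \<Omega>) (incl \<Omega>) \<and> dedekind_complete (Gft \<Omega>) (incl \<Omega>)
       \<and> dedekind_complete (Gnf \<Omega>) (incl \<Omega>) \<and> dedekind_complete (Gset \<Omega>) (incl \<Omega>)"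
proof (intro conjI)
  have G: "dedekind_complete (Gset \<Omega>) (incl \<Omega>)"
    by (rule dedekind_complete_Gset)
  have sub: "Gbd \<Omega> \<subseteq> Gset \<Omega>" "Gft \<Omega> \<subseteq> Gset \<Omega>" "Gnf \<Omega> \<subseteq> Gset \<Omega>"
    by (auto simp: Gbd_def Gft_def Gnf_def)
  show "dedekind_complete (Gbd \<Omega>) (incl \<Omega>)"
    using G sub(1) Gbd_downward_closed by (rule dedekind_complete_downward_closed)
  show "dedekind_complete (Gft \<Omega>) (incl \<Omega>)"
    using G sub(2) Gft_downward_closed by (rule dedekind_complete_downward_closed)
  show "dedekind_complete (Gnf \<Omega>) (incl \<Omega>)"
    using G sub(3) Gnf_downward_closed by (rule dedekind_complete_downward_closed)
  show "dedekind_complete (Gset \<Omega>) (incl \<Omega>)"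
    by (fact G)
qed

end
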